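(* Let $K$ be a commutative integral domain, $n,r\ge1$, $V$ a free $K$-module of rank $n$, and $\Phi:K\mathfrak{S}_r\to\operatorname{End}_K(V^{\otimes r})$ the representation given by right place permutations $(u_1\otimes\cdots\otimes u_r)\sigma=u_{1\sigma^{-1}}\otimes\cdots\otimes u_{r\sigma^{-1}}$. Let $P$ be the set of partitions $\lambda$ of $r$ with $\lambda_1>n$, and let $A[P]\subseteq K\mathfrak{S}_r$ be the $K$-span of all $y_{ST}$ where $(S,T)$ ranges over pairs of standard $\lambda$-tableaux with $\lambda\in P$. Then $A[P]\subseteq\ker\Phi$.
   Context: For a composition $\lambda$ of $r$, a $\lambda$-tableau is a bijective filling of the Young diagram of shape $\lambda$ (row $i$ has $\lambda_i$ boxes) with $1,\dots,r$; it is row standard if entries increase along rows, standard if they also increase down columns. $\mathfrak{S}_r$ acts on tableaux on the right by permuting entries. $T^\lambda$ is the $\lambda$-tableau with $1,\dots,r$ entered in order left to right along rows, top to bottom; $\mathfrak{S}_\lambda$ is its row stabilizer (the Young subgroup). For a row standard $\lambda$-tableau $T$, $d(T)\in\mathfrak{S}_r$ is the unique element with $T=T^\lambda d(T)$. Set $y_\lambda=\sum_{w\in\mathfrak{S}_\lambda}(\operatorname{sgn}w)w$ and $y_{ST}=d(S)^{-1}y_\lambda d(T)$. Permutations compose as $a(\sigma\tau)=(a\sigma)\tau$. *)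

theory Defs
  imports "HOL-Combinatorics.Permutations" "HOL-Library.FuncSet"
begin

text \<open>Entries of tableaux and the letters permuted by the symmetric group
are 0,...,r-1 (an order-preserving relabelling of 1,...,r).  The group law follows the paper's right-action
convention a(sigma tau) = (a sigma) tau, i.e. the product sigma tau is the function
composition tau o sigma.\<close>

definition perms :: "nat \<Rightarrow> (nat \<Rightarrow> nat) set" where
  "perms r = {\<sigma>. \<sigma> permutes {..<r}}"

definition is_partition :: "nat list \<Rightarrow> nat \<Rightarrow> bool" where
  "is_partition lam r \<longleftrightarrow> sorted_wrt (\<ge>) lam \<and> (\<forall>x\<in>set lam. 0 < x) \<and> sum_list lam = r"

definition boxes :: "nat list \<Rightarrow> (nat \<times> nat) set" where
  "boxes lam = {(i, j). i < length lam \<and> j < lam ! i}"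

definition tableau :: "nat list \<Rightarrow> (nat \<times> nat \<Rightarrow> nat) \<Rightarrow> bool" where
  "tableau lam T \<longleftrightarrow> bij_betw T (boxes lam) {..<sum_list lam}"

definition row_standard :: "nat list \<Rightarrow> (nat \<times> nat \<Rightarrow> nat) \<Rightarrow> bool" where
  "row_standard lam T \<longleftrightarrow> tableau lam T \<and>
     (\<forall>i j. (i, Suc j) \<in> boxes lam \<longrightarrow> T (i, j) < T (i, Suc j))"

definition standard :: "nat list \<Rightarrow> (nat \<times> nat \<Rightarrow> nat) \<Rightarrow> bool" where
  "standard lam T \<longleftrightarrow> row_standard lam T \<and>
     (\<forall>i j. (Suc i, j) \<in> boxes lam \<longrightarrow> T (i, j) < T (Suc i, j))"

definition Tlam :: "nat list \<Rightarrow> nat \<times> nat \<Rightarrow> nat" where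
  "Tlam lam = (\<lambda>(i, j). sum_list (take i lam) + j)"

definition tab_act :: "(nat \<times> nat \<Rightarrow> nat) \<Rightarrow> (nat \<Rightarrow> nat) \<Rightarrow> (nat \<times> nat \<Rightarrow> nat)" where
  "tab_act T \<sigma> = (\<lambda>b. \<sigma> (T b))"

definition dT :: "nat list \<Rightarrow> (nat \<times> nat \<Rightarrow> nat) \<Rightarrow> (nat \<Rightarrow> nat)" where
  "dT lam T = (THE \<sigma>. \<sigma> \<in> perms (sum_list lam) \<and>
      (\<forall>b\<in>boxes lam. T b = tab_act (Tlam lam) \<sigma> b))"

definition young_subgroup :: "nat list \<Rightarrow> (nat \<Rightarrow> nat) set" where
  "young_subgroup lam = {w \<in> perms (sum_list lam).
      \<forall>b\<in>boxes lam. \<exists>j. (fst b, j) \<in> boxes lam \<and> w (Tlam lam b) = Tlam lam (fst b, j)}"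

definition group_alg :: "nat \<Rightarrow> ((nat \<Rightarrow> nat) \<Rightarrow> 'a::comm_ring_1) set" where
  "group_alg r = {x. \<forall>\<sigma>. \<sigma> \<notin> perms r \<longrightarrow> x \<sigma> = 0}"

text \<open>y_ST = d(S)^{-1} y_lam d(T) = sum over w in S_lam of sgn(w) d(S)^{-1} w d(T);
  with the right-action convention the group element d(S)^{-1} w d(T) is the function
  dT T o w o inv (dT S).\<close>
definition yST :: "nat list \<Rightarrow> (nat \<times> nat \<Rightarrow> nat) \<Rightarrow> (nat \<times> nat \<Rightarrow> nat)
    \<Rightarrow> (nat \<Rightarrow> nat) \<Rightarrow> 'a::comm_ring_1" where
  "yST lam S T = (\<lambda>\<pi>. \<Sum>w\<in>young_subgroup lam.
      if dT lam T \<circ> w \<circ> inv (dT lam S) = \<pi> then of_int (sign w) else 0)"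

text \<open>V = K^n with basis e_0..e_{n-1}; V^{\<otimes>r} is free with basis the simple tensors
  e_{i(0)} \<otimes> ... \<otimes> e_{i(r-1)}, indexed by i in {..<r} ->E {..<n}.  A tensor is
  represented by its coefficient function on these indices (values elsewhere ignored).\<close>
definition tidx :: "nat \<Rightarrow> nat \<Rightarrow> (nat \<Rightarrow> nat) set" where
  "tidx n r = {..<r} \<rightarrow>\<^sub>E {..<n}"

text \<open>Place permutation on basis tensors: (u_1..u_r) sigma = u_{1 sigma^-1} ... u_{r sigma^-1},
  i.e. index i is sent to i o inv sigma.\<close>
definition Phi :: "nat \<Rightarrow> nat \<Rightarrow> ((nat \<Rightarrow> nat) \<Rightarrow> 'a::comm_ring_1)
    \<Rightarrow> ((nat \<Rightarrow> nat) \<Rightarrow> 'a) \<Rightarrow> ((nat \<Rightarrow> nat) \<Rightarrow> 'a)" where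
  "Phi n r x v = (\<lambda>j. \<Sum>i\<in>tidx n r. \<Sum>\<sigma>\<in>perms r.
      if i \<circ> inv \<sigma> = j then x \<sigma> * v i else 0)"

definition kerPhi :: "nat \<Rightarrow> nat \<Rightarrow> ((nat \<Rightarrow> nat) \<Rightarrow> 'a::comm_ring_1) set" where
  "kerPhi n r = {x \<in> group_alg r. \<forall>v. \<forall>j\<in>tidx n r. Phi n r x v j = 0}"

definition idxP :: "nat \<Rightarrow> nat \<Rightarrow> (nat list \<times> (nat \<times> nat \<Rightarrow> nat) \<times> (nat \<times> nat \<Rightarrow> nat)) set" where
  "idxP n r = {(lam, S, T). is_partition lam r \<and> lam \<noteq> [] \<and> hd lam > n \<and> standard lam S \<and> standard lam T}"

definition AP :: "nat \<Rightarrow> nat \<Rightarrow> ((nat \<Rightarrow> nat) \<Rightarrow> 'a::comm_ring_1) set" where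
  "AP n r = {x. \<exists>F c. finite F \<and> F \<subseteq> idxP n r \<and>
      x = (\<lambda>\<pi>. \<Sum>t\<in>F. c t * (case t of (lam, S, T) \<Rightarrow> yST lam S T \<pi>))}"

end

theory Submission
  imports Defs "HOL-Library.Disjoint_Sets"
begin

text \<open>Applied to a basis tensor e_i, y_ST has as coefficient of e_j the signed sum, over w in
the Young subgroup, of the condition i o d(S) = j o d(T) o w.  The first row of the diagram has
more boxes than there are basis vectors, so by pigeonhole i o d(S) takes the same value at two
first-row entries p /= q of T^lam.  The transposition (p q) lies in the row stabiliser, and
w |-> w (p q) is a fixed-point-free involution of it that reverses the sign and preserves the
condition; hence the sum vanishes, and so does every K-linear combination of such y_ST.\<close>

lemma sum_sign_mult_eq_0_if_transpose_invariant:
  fixes g :: "(nat \<Rightarrow> nat) \<Rightarrow> 'a::comm_ring_1"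
  assumes perm: "\<And>w. w \<in> Y \<Longrightarrow> permutation w" and "p \<noteq> q"
    and closed: "\<And>w. w \<in> Y \<Longrightarrow> w \<circ> transpose p q \<in> Y"
    and invariant: "\<And>w. w \<in> Y \<Longrightarrow> g (w \<circ> transpose p q) = g w"
  shows "(\<Sum>w\<in>Y. of_int (sign w) * g w) = 0"
proof (rule sum_involution_eq_0[where h = "\<lambda>w. w \<circ> transpose p q"])
  fix w assume w: "w \<in> Y"
  have "sign (w \<circ> transpose p q) = - sign w"
    using sign_compose[OF perm[OF w] permutation_swap_id] \<open>p \<noteq> q\<close> by (simp add: sign_swap_id)
  then show "of_int (sign (w \<circ> transpose p q)) * g (w \<circ> transpose p q) + of_int (sign w) * g w = 0"
    using invariant[OF w] by simp
  show "w \<circ> transpose p q \<in> Y" by (rule closed[OF w])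
  show "w \<circ> transpose p q \<circ> transpose p q = w" by (simp add: comp_assoc)
  have "inj w" using permutation_bijective[OF perm[OF w]] by (rule bij_is_inj)
  then show "w \<circ> transpose p q \<noteq> w"
    using \<open>p \<noteq> q\<close> by (metis comp_apply inj_eq transpose_apply_first)
qed

lemma sum_list_take_mono: "i \<le> i' \<Longrightarrow> sum_list (take i xs) \<le> sum_list (take i' (xs :: nat list))"
  by (metis le_add1 le_add_diff_inverse sum_list_append take_add)

lemma Tlam_row_bounds:
  assumes "(i, j) \<in> boxes lam"
  shows "sum_list (take i lam) \<le> Tlam lam (i, j)" "Tlam lam (i, j) < sum_list (take (Suc i) lam)"
  using assms by (auto simp: Tlam_def boxes_def take_Suc_conv_app_nth)

lemma Tlam_less_if_row_less:
  assumes "(i, j) \<in> boxes lam" "(i', j') \<in> boxes lam" "i < i'"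
  shows "Tlam lam (i, j) < Tlam lam (i', j')"
proof -
  have "Tlam lam (i, j) < sum_list (take (Suc i) lam)" using assms(1) by (rule Tlam_row_bounds)
  also have "\<dots> \<le> sum_list (take i' lam)" using assms(3) by (intro sum_list_take_mono) simp
  also have "\<dots> \<le> Tlam lam (i', j')" using assms(2) by (rule Tlam_row_bounds)
  finally show ?thesis .
qed

lemma inj_on_Tlam: "inj_on (Tlam lam) (boxes lam)"
proof (rule inj_onI, clarify)
  fix i j i' j' assume "(i, j) \<in> boxes lam" "(i', j') \<in> boxes lam"
    and eq: "Tlam lam (i, j) = Tlam lam (i', j')"
  then have "i = i'" using Tlam_less_if_row_less by (metis less_irrefl linorder_neqE_nat)
  then show "i = i' \<and> j = j'" using eq by (simp add: Tlam_def)
qed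

lemma card_boxes: "card (boxes lam) = sum_list lam"
proof -
  have "boxes lam = Sigma {..<length lam} (\<lambda>i. {..<lam ! i})" by (auto simp: boxes_def)
  then have "card (boxes lam) = (\<Sum>i<length lam. lam ! i)" by simp
  also have "\<dots> = sum_list lam" by (simp add: sum_list_sum_nth atLeast0LessThan)
  finally show ?thesis .
qed

lemma Tlam_image: "Tlam lam ` boxes lam = {..<sum_list lam}"
proof (rule card_subset_eq)
  show "Tlam lam ` boxes lam \<subseteq> {..<sum_list lam}"
  proof clarify
    fix i j assume "(i, j) \<in> boxes lam"
    then have "Tlam lam (i, j) < sum_list (take (Suc i) lam)" by (rule Tlam_row_bounds)
    also have "\<dots> \<le> sum_list (take (length lam) lam)"
      using \<open>(i, j) \<in> boxes lam\<close> by (intro sum_list_take_mono) (simp add: boxes_def)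
    finally show "Tlam lam (i, j) < sum_list lam" by simp
  qed
  show "card (Tlam lam ` boxes lam) = card {..<sum_list lam}"
    by (simp add: card_image[OF inj_on_Tlam] card_boxes)
qed simp

lemma ex1_dT:
  assumes "tableau lam T"
  shows "\<exists>!\<sigma>. \<sigma> \<in> perms (sum_list lam) \<and> (\<forall>b\<in>boxes lam. T b = tab_act (Tlam lam) \<sigma> b)"
proof
  let ?r = "sum_list lam" and ?B = "boxes lam"
  define \<sigma> where "\<sigma> x = (if x < ?r then T (inv_into ?B (Tlam lam) x) else x)" for x
  have "bij_betw (T \<circ> inv_into ?B (Tlam lam)) {..<?r} {..<?r}"
    using bij_betw_trans[OF bij_betw_inv_into] assms inj_on_Tlam Tlam_image
    by (metis bij_betw_def tableau_def)
  then have "bij_betw \<sigma> {..<?r} {..<?r}"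
    by (rule bij_betw_cong[THEN iffD1, rotated]) (simp add: \<sigma>_def)
  then have "\<sigma> permutes {..<?r}" by (rule bij_imp_permutes) (simp add: \<sigma>_def)
  moreover have "\<forall>b\<in>?B. T b = tab_act (Tlam lam) \<sigma> b"
    using Tlam_image inj_on_Tlam by (auto simp: tab_act_def \<sigma>_def)
  ultimately show "\<sigma> \<in> perms ?r \<and> (\<forall>b\<in>?B. T b = tab_act (Tlam lam) \<sigma> b)"
    by (simp add: perms_def)
  fix \<sigma>' assume \<sigma>': "\<sigma>' \<in> perms ?r \<and> (\<forall>b\<in>?B. T b = tab_act (Tlam lam) \<sigma>' b)"
  show "\<sigma>' = \<sigma>"
  proof
    fix x show "\<sigma>' x = \<sigma> x"
    proof (cases "x < ?r")
      case True
      then obtain b where "b \<in> ?B" "x = Tlam lam b" using Tlam_image by blast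
      then show ?thesis using True \<sigma>' inj_on_Tlam by (simp add: tab_act_def \<sigma>_def)
    next
      case False
      then show ?thesis using \<sigma>' permutes_not_in[of \<sigma>' "{..<?r}" x] by (simp add: perms_def \<sigma>_def)
    qed
  qed
qed

lemma dT_permutes: "tableau lam T \<Longrightarrow> dT lam T permutes {..<sum_list lam}"
  using theI'[OF ex1_dT] unfolding dT_def perms_def by blast

lemma young_subgroup_permutes: "w \<in> young_subgroup lam \<Longrightarrow> w permutes {..<sum_list lam}"
  by (simp add: young_subgroup_def perms_def)

lemma hd_le_sum_list: "lam \<noteq> [] \<Longrightarrow> hd lam \<le> sum_list (lam :: nat list)"
  by (cases lam) auto

lemma Tlam_first_row: "Tlam lam (0, j) = j"
  by (simp add: Tlam_def)

lemma Tlam_less_hd_imp_first_row: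
  assumes "b \<in> boxes lam" "Tlam lam b < hd lam"
  shows "fst b = 0"
proof (rule ccontr)
  obtain i j where b: "b = (i, j)" by fastforce
  assume "fst b \<noteq> 0"
  then have "sum_list (take (Suc 0) lam) \<le> sum_list (take i lam)"
    using b by (intro sum_list_take_mono) simp
  also have "\<dots> \<le> Tlam lam b" using Tlam_row_bounds(1) assms(1) b by simp
  finally show False
    using assms by (cases lam) (auto simp: boxes_def)
qed

lemma young_subgroup_comp_transpose:
  assumes w: "w \<in> young_subgroup lam" and "lam \<noteq> []" and "p < hd lam" "q < hd lam"
  shows "w \<circ> transpose p q \<in> young_subgroup lam"
proof -
  have first_row: "(0, j) \<in> boxes lam" if "j < hd lam" for j
    using that \<open>lam \<noteq> []\<close> by (cases lam) (auto simp: boxes_def)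
  have "transpose p q permutes {..<sum_list lam}"
    using assms hd_le_sum_list[of lam] by (intro permutes_swap_id) auto
  then have "w \<circ> transpose p q \<in> perms (sum_list lam)"
    using young_subgroup_permutes[OF w] by (simp add: perms_def permutes_compose)
  moreover have "\<exists>j. (fst b, j) \<in> boxes lam \<and> (w \<circ> transpose p q) (Tlam lam b) = Tlam lam (fst b, j)"
    if b: "b \<in> boxes lam" for b
  proof (cases "Tlam lam b = p \<or> Tlam lam b = q")
    case True
    have "fst b = 0" using True Tlam_less_hd_imp_first_row[OF b] assms by auto
    obtain j where j: "j < hd lam" "transpose p q (Tlam lam b) = Tlam lam (0, j)"
      using True assms by (auto simp: Tlam_first_row)
    from w first_row[OF j(1)] obtain j' where "(0, j') \<in> boxes lam" "w (Tlam lam (0, j)) = Tlam lam (0, j')"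
      unfolding young_subgroup_def by fastforce
    then show ?thesis using \<open>fst b = 0\<close> j(2) by auto
  next
    case False
    then show ?thesis using w b by (auto simp: young_subgroup_def)
  qed
  ultimately show ?thesis by (simp add: young_subgroup_def)
qed

lemma sum_young_subgroup_sign_mult_eq_0:
  fixes g :: "(nat \<Rightarrow> nat) \<Rightarrow> 'a::comm_ring_1"
  assumes "lam \<noteq> []" "p < hd lam" "q < hd lam" "p \<noteq> q"
    and "\<And>w. w \<in> young_subgroup lam \<Longrightarrow> g (w \<circ> transpose p q) = g w"
  shows "(\<Sum>w\<in>young_subgroup lam. of_int (sign w) * g w) = 0"
  using assms young_subgroup_comp_transpose young_subgroup_permutes permutation_permutes
  by (intro sum_sign_mult_eq_0_if_transpose_invariant) blast+

lemma dT_comp_young_comp_inv_dT_in_perms: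
  assumes "tableau lam S" "tableau lam T" "w \<in> young_subgroup lam"
  shows "dT lam T \<circ> w \<circ> inv (dT lam S) \<in> perms (sum_list lam)"
  using dT_permutes[OF assms(1)] dT_permutes[OF assms(2)] young_subgroup_permutes[OF assms(3)]
  by (simp add: perms_def permutes_compose permutes_inv)

lemma finite_perms: "finite (perms r)"
  by (simp add: perms_def finite_permutations)

lemma yST_in_group_alg:
  assumes "tableau lam S" "tableau lam T"
  shows "yST lam S T \<in> group_alg (sum_list lam)"
  using dT_comp_young_comp_inv_dT_in_perms[OF assms]
  unfolding group_alg_def yST_def by (force intro: sum.neutral)

lemma sum_perms_yST_mult:
  fixes h :: "(nat \<Rightarrow> nat) \<Rightarrow> 'a::comm_ring_1"
  assumes "tableau lam S" "tableau lam T"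
  shows "(\<Sum>\<sigma>\<in>perms (sum_list lam). yST lam S T \<sigma> * h \<sigma>)
       = (\<Sum>w\<in>young_subgroup lam. of_int (sign w) * h (dT lam T \<circ> w \<circ> inv (dT lam S)))"
proof -
  let ?g = "\<lambda>w. dT lam T \<circ> w \<circ> inv (dT lam S)"
  have "(\<Sum>\<sigma>\<in>perms (sum_list lam). yST lam S T \<sigma> * h \<sigma>)
      = (\<Sum>w\<in>young_subgroup lam. \<Sum>\<sigma>\<in>perms (sum_list lam).
           if ?g w = \<sigma> then of_int (sign w) * h \<sigma> else 0)"
    unfolding yST_def sum_distrib_right by (subst sum.swap) (auto intro!: sum.cong)
  also have "\<dots> = (\<Sum>w\<in>young_subgroup lam. of_int (sign w) * h (?g w))"
    using dT_comp_young_comp_inv_dT_in_perms[OF assms] by (simp add: finite_perms)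
  finally show ?thesis .
qed

lemma Phi_eq_sum_coeff:
  "Phi n r x v j = (\<Sum>i\<in>tidx n r. v i * (\<Sum>\<sigma>\<in>perms r. x \<sigma> * of_bool (i \<circ> inv \<sigma> = j)))"
  unfolding Phi_def sum_distrib_left by (intro sum.cong) auto

lemma comp_inv_eq_iff: "bij \<sigma> \<Longrightarrow> i \<circ> inv \<sigma> = j \<longleftrightarrow> i = j \<circ> \<sigma>"
  by (metis bij_is_inj bij_is_surj comp_assoc comp_id inj_iff surj_iff)

lemma comp_inv_conj_eq_iff:
  assumes "bij a" "bij w" "bij b"
  shows "i \<circ> inv (a \<circ> w \<circ> inv b) = j \<longleftrightarrow> i \<circ> b = j \<circ> a \<circ> w"
proof -
  have "inv (a \<circ> w \<circ> inv b) = b \<circ> inv (a \<circ> w)"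
    using assms by (simp add: o_inv_distrib bij_comp bij_imp_bij_inv inv_inv_eq)
  then have "i \<circ> inv (a \<circ> w \<circ> inv b) = (i \<circ> b) \<circ> inv (a \<circ> w)"
    by (simp add: comp_assoc)
  then show ?thesis
    using comp_inv_eq_iff[OF bij_comp[OF assms(2,1)], of "i \<circ> b" j] by (simp add: comp_assoc)
qed

lemma not_inj_on_first_row:
  assumes "i \<in> tidx n (sum_list lam)" "b permutes {..<sum_list lam}" "lam \<noteq> []" "n < hd lam"
  shows "\<not> inj_on (i \<circ> b) {..<hd lam}"
proof
  assume inj: "inj_on (i \<circ> b) {..<hd lam}"
  have "(i \<circ> b) ` {..<hd lam} \<subseteq> {..<n}"
  proof clarify
    fix x assume "x < hd lam"
    then have "b x < sum_list lam"
      using hd_le_sum_list[OF assms(3)] permutes_in_image[OF assms(2)] by simp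
    then show "(i \<circ> b) x < n" using assms(1) by (auto simp: tidx_def)
  qed
  then have "card ((i \<circ> b) ` {..<hd lam}) \<le> n"
    by (metis card_lessThan card_mono finite_lessThan)
  then show False using card_image[OF inj] assms(4) by simp
qed

lemma yST_in_kerPhi:
  assumes S: "tableau lam S" and T: "tableau lam T" and "lam \<noteq> []" "n < hd lam"
  shows "(yST lam S T :: (nat \<Rightarrow> nat) \<Rightarrow> 'a::comm_ring_1) \<in> kerPhi n (sum_list lam)"
proof -
  define a b where "a = dT lam T" and "b = dT lam S"
  have a: "bij a" and b: "b permutes {..<sum_list lam}"
    using dT_permutes[OF T] dT_permutes[OF S] by (auto simp: a_def b_def permutes_bij)
  have coeff_eq_0: "(\<Sum>\<sigma>\<in>perms (sum_list lam). (yST lam S T \<sigma> :: 'a) * of_bool (i \<circ> inv \<sigma> = j)) = 0"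
    if i: "i \<in> tidx n (sum_list lam)" for i j
  proof -
    obtain p q where pq: "p < hd lam" "q < hd lam" "p \<noteq> q" "i (b p) = i (b q)"
      using not_inj_on_first_row[OF i b assms(3,4)] by (auto simp: inj_on_def)
    then have ib_transpose: "i \<circ> b \<circ> transpose p q = i \<circ> b"
      by (auto simp: fun_eq_iff transpose_def)
    have ib_eq_iff: "i \<circ> inv (a \<circ> w \<circ> inv b) = j \<longleftrightarrow> i \<circ> b = j \<circ> a \<circ> w"
      if "w \<in> young_subgroup lam" for w
      using a young_subgroup_permutes[OF that] b by (simp add: comp_inv_conj_eq_iff permutes_bij)
    have "(\<Sum>\<sigma>\<in>perms (sum_list lam). (yST lam S T \<sigma> :: 'a) * of_bool (i \<circ> inv \<sigma> = j))
        = (\<Sum>w\<in>young_subgroup lam. of_int (sign w) * of_bool (i \<circ> inv (a \<circ> w \<circ> inv b) = j))"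
      unfolding a_def b_def by (rule sum_perms_yST_mult[OF S T])
    also have "\<dots> = (\<Sum>w\<in>young_subgroup lam. of_int (sign w) * of_bool (i \<circ> b = j \<circ> a \<circ> w))"
      using ib_eq_iff by simp
    also have "\<dots> = 0"
    proof (rule sum_young_subgroup_sign_mult_eq_0[OF assms(3) pq(1-3)])
      fix w
      have "i \<circ> b = j \<circ> a \<circ> (w \<circ> transpose p q) \<longleftrightarrow> i \<circ> b \<circ> transpose p q = j \<circ> a \<circ> w"
        by (metis comp_assoc comp_id transpose_comp_involutory)
      then show "of_bool (i \<circ> b = j \<circ> a \<circ> (w \<circ> transpose p q)) = (of_bool (i \<circ> b = j \<circ> a \<circ> w) :: 'a)"
        by (simp add: ib_transpose)
    qed
    finally show ?thesis .
  qed
  then show ?thesis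
    by (auto simp: kerPhi_def Phi_eq_sum_coeff yST_in_group_alg[OF S T] intro!: sum.neutral)
qed

lemma Phi_lincomb:
  "Phi n r (\<lambda>\<pi>. \<Sum>t\<in>F. c t * y t \<pi>) v j = (\<Sum>t\<in>F. c t * Phi n r (y t) v j)"
proof -
  let ?e = "\<lambda>t i \<sigma>. c t * (v i * (y t \<sigma> * of_bool (i \<circ> inv \<sigma> = j)))"
  have "Phi n r (\<lambda>\<pi>. \<Sum>t\<in>F. c t * y t \<pi>) v j = (\<Sum>i\<in>tidx n r. \<Sum>\<sigma>\<in>perms r. \<Sum>t\<in>F. ?e t i \<sigma>)"
    by (simp add: Phi_eq_sum_coeff sum_distrib_left sum_distrib_right mult_ac)
  also have "\<dots> = (\<Sum>i\<in>tidx n r. \<Sum>t\<in>F. \<Sum>\<sigma>\<in>perms r. ?e t i \<sigma>)"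
    by (intro sum.cong refl sum.swap)
  also have "\<dots> = (\<Sum>t\<in>F. \<Sum>i\<in>tidx n r. \<Sum>\<sigma>\<in>perms r. ?e t i \<sigma>)"
    by (rule sum.swap)
  also have "\<dots> = (\<Sum>t\<in>F. c t * Phi n r (y t) v j)"
    by (simp add: Phi_eq_sum_coeff sum_distrib_left)
  finally show ?thesis .
qed

lemma lincomb_in_kerPhi:
  assumes "\<And>t. t \<in> F \<Longrightarrow> y t \<in> kerPhi n r"
  shows "(\<lambda>\<pi>. \<Sum>t\<in>F. c t * y t \<pi>) \<in> kerPhi n r"
  using assms by (simp add: kerPhi_def group_alg_def Phi_lincomb)

theorem lemma3p4:
  fixes n r :: nat
  assumes "n \<ge> 1" and "r \<ge> 1"
  shows "(AP n r :: ((nat \<Rightarrow> nat) \<Rightarrow> 'a::idom) set) \<subseteq> kerPhi n r"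
proof
  fix x :: "(nat \<Rightarrow> nat) \<Rightarrow> 'a"
  assume "x \<in> AP n r"
  then obtain F c where F: "F \<subseteq> idxP n r"
    and x: "x = (\<lambda>\<pi>. \<Sum>t\<in>F. c t * (case t of (lam, S, T) \<Rightarrow> yST lam S T \<pi>))"
    by (auto simp: AP_def)
  have y_ker: "(\<lambda>\<pi>. case t of (lam, S, T) \<Rightarrow> yST lam S T \<pi>) \<in> (kerPhi n r :: ((nat \<Rightarrow> nat) \<Rightarrow> 'a) set)"
    if "t \<in> F" for t
  proof -
    obtain lam S T where t: "t = (lam, S, T)" by (cases t)
    with that F have "sum_list lam = r" "lam \<noteq> []" "n < hd lam" "tableau lam S" "tableau lam T"
      by (auto simp: idxP_def is_partition_def standard_def row_standard_def)
    then show ?thesis using yST_in_kerPhi[of lam S T n] by (simp add: t)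
  qed
  show "x \<in> kerPhi n r"
    unfolding x by (rule lincomb_in_kerPhi) (rule y_ker)
qed

end
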